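(* Let $G$ be a strongly connected signed digraph on $[n]$ without positive cycles, which is not a cycle. If $\tau(G)\le 1$, then there is a word $w$ of length $3n-1$ which synchronizes every and-or-net on $G$.
   Context: A signed digraph on $V$ is $(V,E)$ with $E\subseteq V\times V\times\{-1,1\}$ (loops allowed). Cycles have no repeated vertices (a loop is a cycle); the sign of a cycle is the product of its arc signs; "$G$ is a cycle" means $G$ itself is a single cycle. $\tau(G)$ is the minimum size of a feedback vertex set of $G$ (a set of vertices meeting every cycle). A Boolean network (BN) is $f:\{0,1\}^V\to\{0,1\}^V$; its signed interaction digraph has a positive (negative) arc from $j$ to $i$ iff for some $x$ with $x_j=0$, $f_i(x+e_j)-f_i(x)$ is positive (negative). An and-or-net on $G$ is a BN whose signed interaction digraph is $G$ and each $f_i$ is a conjunction ($f_i(x)=1$ iff $x_j=1$ for all positive and $x_j=0$ for all negative in-neighbors $j$ of $i$) or a disjunction ($f_i(x)=0$ iff $x_j=0$ for all positive and $x_j=1$ for all negative in-neighbors). $f^i(x)$ is $x$ with $x_i$ replaced by $f_i(x)$; $f^{i_1\cdots i_\ell}=f^{i_\ell}\circ\cdots\circ f^{i_1}$; $w$ synchronizes $f$ if $f^w$ is constant. *)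

theory Defs
  imports Main
begin

text \<open>Signed digraphs on a vertex set V: arcs (j, i, s) from j to i with sign s in {-1,1}.
  Boolean configurations x in {0,1}^V are represented by the subset of V of vertices with value 1.
  A Boolean network is a map f on such subsets (only its values on subsets of V matter).\<close>

type_synonym sdigraph = "(nat \<times> nat \<times> int) set"

definition signed_digraph :: "nat set \<Rightarrow> sdigraph \<Rightarrow> bool" where
  "signed_digraph V E \<longleftrightarrow> E \<subseteq> V \<times> V \<times> {-1, 1}"

definition strongly_connected :: "nat set \<Rightarrow> sdigraph \<Rightarrow> bool" where
  "strongly_connected V E \<longleftrightarrow>
     (\<forall>i\<in>V. \<forall>j\<in>V. (i, j) \<in> {(a, b). \<exists>s. (a, b, s) \<in> E}\<^sup>*)"

definition is_cycle :: "sdigraph \<Rightarrow> nat list \<Rightarrow> int list \<Rightarrow> bool" where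
  "is_cycle E vs ss \<longleftrightarrow> vs \<noteq> [] \<and> distinct vs \<and> length ss = length vs \<and>
     (\<forall>t < length vs. (vs ! t, vs ! ((t + 1) mod length vs), ss ! t) \<in> E)"

definition cycle_sign :: "int list \<Rightarrow> int" where
  "cycle_sign ss = prod_list ss"

definition no_positive_cycle :: "sdigraph \<Rightarrow> bool" where
  "no_positive_cycle E \<longleftrightarrow> (\<forall>vs ss. is_cycle E vs ss \<longrightarrow> cycle_sign ss \<noteq> 1)"

definition graph_is_cycle :: "nat set \<Rightarrow> sdigraph \<Rightarrow> bool" where
  "graph_is_cycle V E \<longleftrightarrow> (\<exists>vs ss. is_cycle E vs ss \<and> set vs = V \<and>
     E = {(vs ! t, vs ! ((t + 1) mod length vs), ss ! t) | t. t < length vs})"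

definition feedback_vertex_set :: "nat set \<Rightarrow> sdigraph \<Rightarrow> nat set \<Rightarrow> bool" where
  "feedback_vertex_set V E F \<longleftrightarrow> F \<subseteq> V \<and>
     (\<forall>vs ss. is_cycle E vs ss \<longrightarrow> set vs \<inter> F \<noteq> {})"

definition tau :: "nat set \<Rightarrow> sdigraph \<Rightarrow> nat" where
  "tau V E = (LEAST k. \<exists>F. feedback_vertex_set V E F \<and> card F = k)"

definition is_BN :: "nat set \<Rightarrow> (nat set \<Rightarrow> nat set) \<Rightarrow> bool" where
  "is_BN V f \<longleftrightarrow> (\<forall>x. x \<subseteq> V \<longrightarrow> f x \<subseteq> V)"

definition interaction_digraph :: "nat set \<Rightarrow> (nat set \<Rightarrow> nat set) \<Rightarrow> sdigraph" where
  "interaction_digraph V f =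
     {(j, i, s). j \<in> V \<and> i \<in> V \<and>
        ((s = 1 \<and> (\<exists>x. x \<subseteq> V \<and> j \<notin> x \<and> i \<notin> f x \<and> i \<in> f (insert j x))) \<or>
         (s = -1 \<and> (\<exists>x. x \<subseteq> V \<and> j \<notin> x \<and> i \<in> f x \<and> i \<notin> f (insert j x))))}"

definition and_or_net :: "nat set \<Rightarrow> sdigraph \<Rightarrow> (nat set \<Rightarrow> nat set) \<Rightarrow> bool" where
  "and_or_net V E f \<longleftrightarrow> is_BN V f \<and> interaction_digraph V f = E \<and>
     (\<forall>i\<in>V.
        (\<forall>x. x \<subseteq> V \<longrightarrow>
           (i \<in> f x \<longleftrightarrow> (\<forall>j. ((j, i, 1) \<in> E \<longrightarrow> j \<in> x) \<and> ((j, i, -1) \<in> E \<longrightarrow> j \<notin> x))))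
      \<or> (\<forall>x. x \<subseteq> V \<longrightarrow>
           (i \<notin> f x \<longleftrightarrow> (\<forall>j. ((j, i, 1) \<in> E \<longrightarrow> j \<notin> x) \<and> ((j, i, -1) \<in> E \<longrightarrow> j \<in> x)))))"

definition upd :: "(nat set \<Rightarrow> nat set) \<Rightarrow> nat \<Rightarrow> nat set \<Rightarrow> nat set" where
  "upd f i x = (if i \<in> f x then insert i x else x - {i})"

definition upd_word :: "(nat set \<Rightarrow> nat set) \<Rightarrow> nat list \<Rightarrow> nat set \<Rightarrow> nat set" where
  "upd_word f w x = fold (upd f) w x"

definition synchronizes :: "nat set \<Rightarrow> (nat set \<Rightarrow> nat set) \<Rightarrow> nat list \<Rightarrow> bool" where
  "synchronizes V f w \<longleftrightarrow> (\<exists>c. \<forall>x. x \<subseteq> V \<longrightarrow> upd_word f w x = c)"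

end

theory Submission
  imports Defs "HOL-Library.Transitive_Closure_Table"
begin

text \<open>Let {v} be a feedback vertex set. Since every cycle passes through v and no cycle is positive,
  all simple paths from v have a sign depending only on their endpoint, so a switching \<sigma> makes
  exactly the arcs entering v negative. After a sweep along a topological order S of G - v every
  vertex agrees with v up to \<sigma>, so the in-literals of v all take the same value and the next update
  negates v. If v has two in-neighbours, an in-closed set W of G - v contains one of them (or v)
  but not the other; after a sweep along a topological order T of W the in-literals of v disagree,
  and the second update sets v to 0 if v is a conjunction and to 1 if it is a disjunction, whatever
  the initial state. A final sweep along S propagates this value, so S v T v S synchronizes every
  and-or-net, and its length is at most 3n - 2. Unless G is a cycle such a v exists, because a singleton feedback
  vertex set whose vertex has a unique in-neighbour can be moved to that in-neighbour.\<close>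

section \<open>Cycles and feedback vertex sets\<close>

definition arc_rel :: "sdigraph \<Rightarrow> (nat \<times> nat) set" where
  "arc_rel E = {(a, b). \<exists>s. (a, b, s) \<in> E}"

definition arc_rel_without :: "sdigraph \<Rightarrow> nat \<Rightarrow> (nat \<times> nat) set" where
  "arc_rel_without E v = {(a, b) \<in> arc_rel E. a \<noteq> v \<and> b \<noteq> v}"

lemma arc_relI [intro]: "(a, b, s) \<in> E \<Longrightarrow> (a, b) \<in> arc_rel E"
  unfolding arc_rel_def by blast

lemma signed_digraph_arcD:
  "signed_digraph V E \<Longrightarrow> (a, b, s) \<in> E \<Longrightarrow> a \<in> V \<and> b \<in> V \<and> s \<in> {1, -1}"
  unfolding signed_digraph_def by auto

lemma strongly_connected_rtrancl:
  "strongly_connected V E \<Longrightarrow> u \<in> V \<Longrightarrow> w \<in> V \<Longrightarrow> (u, w) \<in> (arc_rel E)\<^sup>*"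
  unfolding strongly_connected_def arc_rel_def by blast

lemma strongly_connected_in_arc:
  assumes "strongly_connected V E" "2 \<le> card V" "u \<in> V"
  obtains a s where "(a, u, s) \<in> E"
proof -
  have "\<not> V \<subseteq> {u}"
  proof
    assume "V \<subseteq> {u}"
    then have "card V \<le> 1" using card_mono[of "{u}" V] by simp
    with assms(2) show False by simp
  qed
  then obtain w where "w \<in> V" "w \<noteq> u" by blast
  with strongly_connected_rtrancl[OF assms(1) _ assms(3)] have "(w, u) \<in> (arc_rel E)\<^sup>*" "w \<noteq> u"
    by blast+
  then show thesis using that by (cases rule: rtranclE) (auto simp: arc_rel_def)
qed

lemma cycle_in_trancl:
  assumes "(x, x) \<in> R\<^sup>+" "R \<subseteq> arc_rel E"
  obtains vs ss where "is_cycle E vs ss" "set vs \<subseteq> Field R"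
proof -
  obtain y where xy: "(x, y) \<in> R" and "(y, x) \<in> R\<^sup>*"
    using assms(1) by (meson tranclD)
  then obtain xs where "rtrancl_path (\<lambda>a b. (a, b) \<in> R) y xs x"
    using rtranclp_eq_rtrancl_path[of "\<lambda>a b. (a, b) \<in> R" y x] by (auto simp: rtranclp_rtrancl_eq)
  then obtain xs' where path: "rtrancl_path (\<lambda>a b. (a, b) \<in> R) y xs' x" and "distinct (y # xs')"
    using rtrancl_path_distinct by metis
  define vs where "vs = y # xs'"
  have last_vs: "last vs = x"
    using path rtrancl_path_last[OF path] unfolding vs_def
    by (cases xs') (auto elim: rtrancl_path.cases)
  have step: "(vs ! t, vs ! ((t + 1) mod length vs)) \<in> R" if "t < length vs" for t
  proof (cases "t < length xs'")
    case True
    then show ?thesis using rtrancl_path_nth[OF path True] unfolding vs_def by simp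
  next
    case False
    with that have t: "t = length vs - 1" unfolding vs_def by simp
    then have "vs ! t = x" "(t + 1) mod length vs = 0"
      using last_vs by (auto simp: vs_def last_conv_nth)
    then show ?thesis using xy by (simp add: vs_def)
  qed
  define ss where "ss = map (\<lambda>t. SOME s. (vs ! t, vs ! ((t + 1) mod length vs), s) \<in> E) [0..<length vs]"
  have "is_cycle E vs ss"
    unfolding is_cycle_def
  proof (intro conjI allI impI)
    show "vs \<noteq> []" "distinct vs" "length ss = length vs"
      using \<open>distinct (y # xs')\<close> unfolding vs_def ss_def by auto
    fix t assume "t < length vs"
    with step assms(2) obtain s where "(vs ! t, vs ! ((t + 1) mod length vs), s) \<in> E"
      unfolding arc_rel_def by blast
    then show "(vs ! t, vs ! ((t + 1) mod length vs), ss ! t) \<in> E"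
      unfolding ss_def using \<open>t < length vs\<close> by (auto intro: someI)
  qed
  moreover have "set vs \<subseteq> Field R"
    using step by (force simp: in_set_conv_nth Field_def)
  ultimately show thesis by (rule that)
qed

lemma cycle_predecessor:
  assumes "is_cycle E vs ss" "b \<in> set vs"
  obtains t where "t < length vs" "vs ! ((t + 1) mod length vs) = b"
proof -
  obtain t0 where t0: "t0 < length vs" "vs ! t0 = b"
    using assms(2) by (metis in_set_conv_nth)
  define t where "t = (if t0 = 0 then length vs - 1 else t0 - 1)"
  have "t < length vs" "(t + 1) mod length vs = t0"
    using t0 unfolding t_def by auto
  with t0 show thesis by (intro that[of t]) auto
qed

lemma feedback_vertex_acyclic:
  assumes "feedback_vertex_set V E {v}"
  shows "acyclic (arc_rel_without E v)"
  unfolding acyclic_def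
proof (intro allI notI)
  fix x
  assume "(x, x) \<in> (arc_rel_without E v)\<^sup>+"
  then obtain vs ss where "is_cycle E vs ss" "set vs \<subseteq> Field (arc_rel_without E v)"
    by (rule cycle_in_trancl) (auto simp: arc_rel_without_def)
  moreover have "v \<notin> Field (arc_rel_without E v)"
    unfolding arc_rel_without_def Field_def by auto
  ultimately show False
    using assms unfolding feedback_vertex_set_def by blast
qed

fun topo_sorted :: "sdigraph \<Rightarrow> nat set \<Rightarrow> nat list \<Rightarrow> bool" where
  "topo_sorted E A [] \<longleftrightarrow> True"
| "topo_sorted E A (u # S) \<longleftrightarrow> (\<forall>a s. (a, u, s) \<in> E \<longrightarrow> a \<in> A) \<and> topo_sorted E (insert u A) S"

lemma topo_sorted_exists:
  "finite W \<Longrightarrow> acyclic (arc_rel E \<inter> W \<times> W) \<Longrightarrow> \<forall>w\<in>W. \<forall>a s. (a, w, s) \<in> E \<longrightarrow> a \<in> A \<union> W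
    \<Longrightarrow> \<exists>T. topo_sorted E A T \<and> set T = W \<and> distinct T"
proof (induction W arbitrary: A rule: finite_remove_induct)
  case empty
  show ?case by auto
next
  case (remove W)
  let ?R = "arc_rel E \<inter> W \<times> W"
  have "wf ?R"
    using remove.prems(1) \<open>finite W\<close> by (intro finite_acyclic_wf) (auto intro: finite_subset)
  then obtain z where z: "z \<in> W" and source: "\<And>y. (y, z) \<in> ?R \<Longrightarrow> y \<notin> W"
    using \<open>W \<noteq> {}\<close> by (metis ex_in_conv wfE_min)
  have "acyclic (arc_rel E \<inter> (W - {z}) \<times> (W - {z}))"
    using remove.prems(1) by (rule acyclic_subset) blast
  moreover have "\<forall>w\<in>W - {z}. \<forall>a s. (a, w, s) \<in> E \<longrightarrow> a \<in> insert z A \<union> (W - {z})"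
    using remove.prems(2) by blast
  ultimately obtain T where T: "topo_sorted E (insert z A) T" "set T = W - {z}" "distinct T"
    using remove.IH[OF z] by blast
  have "\<forall>a s. (a, z, s) \<in> E \<longrightarrow> a \<in> A"
    using remove.prems(2) z source by blast
  with T z show ?case
    by (intro exI[of _ "z # T"]) auto
qed

lemma separating_in_closed_set:
  assumes sd: "signed_digraph V E" and acyc: "acyclic (arc_rel_without E v)"
    and a1: "(a1, v, s1) \<in> E" and a2: "(a2, v, s2) \<in> E" and "a1 \<noteq> a2"
  obtains W b1 t1 b2 t2 where "W \<subseteq> V - {v}" "\<forall>w\<in>W. \<forall>a s. (a, w, s) \<in> E \<longrightarrow> a \<in> insert v W"
    "(b1, v, t1) \<in> E" "b1 \<in> insert v W" "(b2, v, t2) \<in> E" "b2 \<in> V - insert v W"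
proof -
  let ?R = "arc_rel_without E v"
  have into_v: "x = v" if "(x, v) \<in> ?R\<^sup>*" for x
    using that by (cases rule: rtranclE) (auto simp: arc_rel_without_def)
  \<comment> \<open>The ancestors of p in G - v form an in-closed set containing p but not q.\<close>
  have separate: thesis if p: "(p, v, sp) \<in> E" and q: "(q, v, sq) \<in> E" "q \<noteq> v"
    and not_above: "(q, p) \<notin> ?R\<^sup>*" for p q sp sq
  proof
    let ?W = "{x \<in> V - {v}. (x, p) \<in> ?R\<^sup>*}"
    show "?W \<subseteq> V - {v}" by blast
    show "\<forall>w\<in>?W. \<forall>a s. (a, w, s) \<in> E \<longrightarrow> a \<in> insert v ?W"
    proof (intro ballI allI impI)
      fix w a s assume "w \<in> ?W" "(a, w, s) \<in> E"
      moreover from this have "a \<in> V" using sd signed_digraph_arcD by blast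
      ultimately show "a \<in> insert v ?W"
        by (auto simp: arc_rel_without_def intro: converse_rtrancl_into_rtrancl)
    qed
    show "p \<in> insert v ?W" using p sd signed_digraph_arcD by blast
    show "q \<in> V - insert v ?W" using q not_above sd signed_digraph_arcD by blast
  qed (use p q in auto)
  consider "a2 \<noteq> v" "(a2, a1) \<notin> ?R\<^sup>*" | "a1 \<noteq> v" "(a1, a2) \<notin> ?R\<^sup>*"
  proof (cases "(a2, a1) \<in> ?R\<^sup>*")
    case True
    with \<open>a1 \<noteq> a2\<close> have "(a2, a1) \<in> ?R\<^sup>+" by (metis rtranclD)
    then have "a1 \<noteq> v" by (cases rule: tranclE) (auto simp: arc_rel_without_def)
    moreover have "(a1, a2) \<notin> ?R\<^sup>*"
      using acyc \<open>(a2, a1) \<in> ?R\<^sup>+\<close> \<open>a1 \<noteq> a2\<close> unfolding acyclic_def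
      by (meson rtranclD trancl_trans)
    ultimately show thesis by (rule that(2))
  next
    case False
    then show thesis using that into_v \<open>a1 \<noteq> a2\<close> by (cases "a2 = v") blast+
  qed
  then show thesis
  proof cases
    case 1
    then show thesis by (rule separate[OF a1 a2])
  next
    case 2
    then show thesis by (rule separate[OF a2 a1])
  qed
qed

lemma feedback_vertex_unique_in_neighbour:
  assumes "feedback_vertex_set V E {w}" "(u, w, s) \<in> E" "u \<in> V"
    and unique: "\<forall>a s. (a, w, s) \<in> E \<longrightarrow> a = u"
  shows "feedback_vertex_set V E {u}"
  unfolding feedback_vertex_set_def
proof (intro conjI allI impI)
  fix vs ss assume cycle: "is_cycle E vs ss"
  with assms(1) have "w \<in> set vs" unfolding feedback_vertex_set_def by blast
  then obtain t where t: "t < length vs" "vs ! ((t + 1) mod length vs) = w"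
    using cycle cycle_predecessor by metis
  with cycle have "(vs ! t, w, ss ! t) \<in> E" unfolding is_cycle_def by metis
  with unique have "vs ! t = u" by blast
  with t(1) have "u \<in> set vs" by (metis nth_mem)
  then show "set vs \<inter> {u} \<noteq> {}" by blast
qed (use assms(3) in simp)

lemma strongly_connected_in_degree_one_cycle_covers:
  assumes sd: "signed_digraph V E" and sc: "strongly_connected V E"
    and unique: "\<And>a a' b s s'. (a, b, s) \<in> E \<Longrightarrow> (a', b, s') \<in> E \<Longrightarrow> a = a' \<and> s = s'"
    and cycle: "is_cycle E vs ss" and "u \<in> V"
  shows "u \<in> set vs"
proof -
  have arcs: "(vs ! t, vs ! ((t + 1) mod length vs), ss ! t) \<in> E" if "t < length vs" for t
    using cycle that unfolding is_cycle_def by blast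
  have "vs \<noteq> []" using cycle unfolding is_cycle_def by blast
  with arcs[of 0] sd have "vs ! 0 \<in> V" using signed_digraph_arcD by blast
  with sc \<open>u \<in> V\<close> have "(u, vs ! 0) \<in> (arc_rel E)\<^sup>*" by (rule strongly_connected_rtrancl)
  then show ?thesis
  proof (induction rule: converse_rtrancl_induct)
    case base
    show ?case using \<open>vs \<noteq> []\<close> by simp
  next
    case (step y z)
    then obtain s where "(y, z, s) \<in> E" unfolding arc_rel_def by blast
    moreover obtain t where t: "t < length vs" "vs ! ((t + 1) mod length vs) = z"
      using cycle step.IH by (rule cycle_predecessor)
    ultimately have "y = vs ! t" using arcs[OF t(1)] unique by simp
    with t(1) show ?case by simp
  qed
qed

lemma strongly_connected_in_degree_one_is_cycle:
  assumes sd: "signed_digraph V E" and sc: "strongly_connected V E" and "E \<noteq> {}"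
    and unique: "\<And>a a' b s s'. (a, b, s) \<in> E \<Longrightarrow> (a', b, s') \<in> E \<Longrightarrow> a = a' \<and> s = s'"
  shows "graph_is_cycle V E"
proof -
  obtain a b s where ab: "(a, b, s) \<in> E" using \<open>E \<noteq> {}\<close> by auto
  with sd sc have "(b, a) \<in> (arc_rel E)\<^sup>*"
    using signed_digraph_arcD strongly_connected_rtrancl by blast
  with ab have "(a, a) \<in> (arc_rel E)\<^sup>+" by (meson arc_relI rtrancl_into_trancl2)
  then obtain vs ss where cycle: "is_cycle E vs ss" "set vs \<subseteq> Field (arc_rel E)"
    by (rule cycle_in_trancl[OF _ order.refl])
  have on_cycle: "u \<in> set vs" if "u \<in> V" for u
    using strongly_connected_in_degree_one_cycle_covers[OF sd sc _ cycle(1) that] unique by blast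
  have arcs: "(vs ! t, vs ! ((t + 1) mod length vs), ss ! t) \<in> E" if "t < length vs" for t
    using cycle(1) that unfolding is_cycle_def by blast
  show ?thesis
    unfolding graph_is_cycle_def
  proof (intro exI conjI)
    show "set vs = V"
      using cycle(2) on_cycle sd signed_digraph_arcD unfolding Field_def arc_rel_def by blast
    show "E = {(vs ! t, vs ! ((t + 1) mod length vs), ss ! t) | t. t < length vs}"
    proof (intro equalityI subsetI)
      fix e assume "e \<in> E"
      then obtain a b s where e: "e = (a, b, s)" "(a, b, s) \<in> E" by (cases e) auto
      then have "b \<in> set vs" using on_cycle sd signed_digraph_arcD by blast
      then obtain t where t: "t < length vs" "vs ! ((t + 1) mod length vs) = b"
        using cycle_predecessor[OF cycle(1)] by blast
      with e(2) have "a = vs ! t \<and> s = ss ! t" using arcs[OF t(1)] unique by simp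
      with e t show "e \<in> {(vs ! t, vs ! ((t + 1) mod length vs), ss ! t) | t. t < length vs}"
        by auto
    qed (use arcs in blast)
  qed (rule cycle(1))
qed

lemma feedback_vertex_with_two_in_neighbours:
  assumes sd: "signed_digraph V E" and sc: "strongly_connected V E" and "E \<noteq> {}"
    and not_cycle: "\<not> graph_is_cycle V E"
    and unique_sign: "\<And>a b s s'. (a, b, s) \<in> E \<Longrightarrow> (a, b, s') \<in> E \<Longrightarrow> s = s'"
    and v0: "v0 \<in> V" "feedback_vertex_set V E {v0}"
  obtains v a1 s1 a2 s2 where "v \<in> V" "feedback_vertex_set V E {v}"
    "(a1, v, s1) \<in> E" "(a2, v, s2) \<in> E" "a1 \<noteq> a2"
proof (rule ccontr)
  note good = that
  assume no_good: "\<not> thesis"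
  have one_in_neighbour: "a = a'"
    if "w \<in> V" "feedback_vertex_set V E {w}" "(a, w, s) \<in> E" "(a', w, s') \<in> E" for w a a' s s'
  proof (rule ccontr)
    assume "a \<noteq> a'"
    with no_good show False using good[OF that] by blast
  qed
  \<comment> \<open>Being a singleton feedback vertex set propagates backwards along the unique in-arcs.\<close>
  have all_feedback: "feedback_vertex_set V E {u}" if "u \<in> V" for u
  proof -
    have "(u, v0) \<in> (arc_rel E)\<^sup>*" using sc that v0(1) by (rule strongly_connected_rtrancl)
    then show ?thesis
    proof (induction rule: converse_rtrancl_induct)
      case base
      show ?case by (rule v0(2))
    next
      case (step y z)
      then obtain s where yz: "(y, z, s) \<in> E" unfolding arc_rel_def by blast
      with sd have "y \<in> V" "z \<in> V" using signed_digraph_arcD by blast+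
      have "\<forall>a s. (a, z, s) \<in> E \<longrightarrow> a = y"
        using one_in_neighbour[OF \<open>z \<in> V\<close> step.IH _ yz] by blast
      then show ?case by (rule feedback_vertex_unique_in_neighbour[OF step.IH yz \<open>y \<in> V\<close>])
    qed
  qed
  have "graph_is_cycle V E"
  proof (rule strongly_connected_in_degree_one_is_cycle[OF sd sc \<open>E \<noteq> {}\<close>])
    fix a a' b s s' assume "(a, b, s) \<in> E" "(a', b, s') \<in> E"
    moreover from this have "b \<in> V" using sd signed_digraph_arcD by blast
    ultimately have "a = a'" using one_in_neighbour[OF _ all_feedback] by blast
    with \<open>(a, b, s) \<in> E\<close> \<open>(a', b, s') \<in> E\<close> show "a = a' \<and> s = s'" using unique_sign by blast
  qed
  with not_cycle show False ..
qed

lemma tau_le_one_feedback_vertex: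
  assumes sd: "signed_digraph V E" and "finite V" "V \<noteq> {}" and "tau V E \<le> 1"
  obtains v where "v \<in> V" "feedback_vertex_set V E {v}"
proof -
  have "feedback_vertex_set V E V"
    unfolding feedback_vertex_set_def
  proof (intro conjI allI impI)
    fix vs ss assume "is_cycle E vs ss"
    then have "vs ! 0 \<in> set vs" "(vs ! 0, vs ! ((0 + 1) mod length vs), ss ! 0) \<in> E"
      unfolding is_cycle_def by auto
    then show "set vs \<inter> V \<noteq> {}" using sd signed_digraph_arcD by blast
  qed simp
  then have "\<exists>F. feedback_vertex_set V E F \<and> card F = tau V E"
    unfolding tau_def using LeastI_ex[of "\<lambda>k. \<exists>F. feedback_vertex_set V E F \<and> card F = k"] by blast
  then obtain F where F: "feedback_vertex_set V E F" "card F = tau V E" by blast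
  have "finite F" using F(1) \<open>finite V\<close> finite_subset unfolding feedback_vertex_set_def by blast
  consider "F = {}" | u where "F = {u}"
  proof (cases "card F")
    case 0
    then show thesis using \<open>finite F\<close> that(1) by simp
  next
    case (Suc k)
    then have "card F = 1" using F(2) \<open>tau V E \<le> 1\<close> by simp
    then show thesis using that(2) by (metis card_1_singletonE)
  qed
  then show thesis
  proof cases
    case 1
    obtain u where "u \<in> V" using \<open>V \<noteq> {}\<close> by blast
    with F(1) 1 show thesis by (intro that[of u]) (auto simp: feedback_vertex_set_def)
  next
    case 2
    with F(1) show thesis by (intro that[of u]) (auto simp: feedback_vertex_set_def)
  qed
qed

section \<open>Switching a graph whose cycles all pass through one vertex\<close>

inductive path_from :: "sdigraph \<Rightarrow> nat \<Rightarrow> nat list \<Rightarrow> int list \<Rightarrow> bool" for E v where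
  start: "path_from E v [v] []"
| snoc: "path_from E v vs ss \<Longrightarrow> (last vs, b, s) \<in> E \<Longrightarrow> b \<notin> set vs
    \<Longrightarrow> path_from E v (vs @ [b]) (ss @ [s])"

lemma path_from_simple:
  "path_from E v vs ss \<Longrightarrow> hd vs = v \<and> distinct vs \<and> length vs = Suc (length ss)"
  by (induction rule: path_from.induct) (auto simp: hd_append)

lemma path_from_arcs:
  "path_from E v vs ss \<Longrightarrow> t < length ss \<Longrightarrow> (vs ! t, vs ! Suc t, ss ! t) \<in> E"
proof (induction arbitrary: t rule: path_from.induct)
  case start
  then show ?case by simp
next
  case (snoc vs ss b s)
  have len: "length vs = Suc (length ss)" using path_from_simple[OF snoc.hyps(1)] by blast
  then have "last vs = vs ! (length vs - 1)" by (intro last_conv_nth) auto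
  with len have "last vs = vs ! length ss" by simp
  with snoc len show ?case
    by (cases "t < length ss") (auto simp: nth_append less_Suc_eq)
qed

lemma path_from_cycle:
  assumes "path_from E v vs ss" "(last vs, v, s) \<in> E"
  shows "is_cycle E vs (ss @ [s])"
proof -
  have simple: "hd vs = v" "distinct vs" "length vs = Suc (length ss)"
    using path_from_simple[OF assms(1)] by auto
  show ?thesis
    unfolding is_cycle_def
  proof (intro conjI allI impI)
    fix t assume "t < length vs"
    then consider "t < length ss" | "t = length ss" using simple(3) by linarith
    then show "(vs ! t, vs ! ((t + 1) mod length vs), (ss @ [s]) ! t) \<in> E"
    proof cases
      case 1
      then show ?thesis using path_from_arcs[OF assms(1)] simple(3) by (simp add: nth_append)
    next
      case 2
      have "vs \<noteq> []" using simple(3) by auto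
      with 2 simple have "vs ! t = last vs" "vs ! ((t + 1) mod length vs) = v"
        by (simp_all add: last_conv_nth hd_conv_nth)
      with 2 assms(2) show ?thesis by simp
    qed
  qed (use simple in auto)
qed

lemma path_from_signs: "path_from E v vs ss \<Longrightarrow> signed_digraph V E \<Longrightarrow> set ss \<subseteq> {1, -1}"
  by (induction rule: path_from.induct) (auto dest: signed_digraph_arcD)

lemma path_from_rtrancl:
  "path_from E v vs ss \<Longrightarrow> x \<in> set (tl vs) \<Longrightarrow> (x, last vs) \<in> (arc_rel_without E v)\<^sup>*"
proof (induction rule: path_from.induct)
  case start
  then show ?case by simp
next
  case (snoc vs ss b s)
  obtain us where vs: "vs = v # us" "v \<notin> set us"
    using path_from_simple[OF snoc.hyps(1)] by (cases vs) auto
  show ?case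
  proof (cases "x = b")
    case False
    with snoc.prems vs have x: "x \<in> set us" by simp
    then have "last vs \<in> set us" using vs(1) by (metis empty_iff last_ConsR last_in_set list.set(1))
    with vs snoc.hyps(2,3) have "(last vs, b) \<in> arc_rel_without E v"
      unfolding arc_rel_without_def by auto
    with snoc.IH x vs(1) show ?thesis by (simp add: rtrancl_into_rtrancl)
  qed simp
qed

lemma path_from_snoc_acyclic:
  assumes acyc: "acyclic (arc_rel_without E v)" and path: "path_from E v vs ss"
    and arc: "(last vs, b, s) \<in> E" and "b \<noteq> v"
  shows "path_from E v (vs @ [b]) (ss @ [s])"
proof (rule path_from.snoc[OF path arc])
  show "b \<notin> set vs"
  proof
    assume "b \<in> set vs"
    obtain us where vs: "vs = v # us" "v \<notin> set us"
      using path_from_simple[OF path] by (cases vs) auto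
    with \<open>b \<in> set vs\<close> \<open>b \<noteq> v\<close> have b: "b \<in> set (tl vs)" by simp
    then have "last vs \<in> set us" using vs(1) by (metis empty_iff last_ConsR last_in_set list.set(1) list.sel(3))
    with vs(2) arc \<open>b \<noteq> v\<close> have "(last vs, b) \<in> arc_rel_without E v"
      unfolding arc_rel_without_def by auto
    with path_from_rtrancl[OF path b] have "(b, b) \<in> (arc_rel_without E v)\<^sup>+"
      by (rule rtrancl_into_trancl1)
    with acyc show False unfolding acyclic_def by blast
  qed
qed

definition path_sign :: "sdigraph \<Rightarrow> nat \<Rightarrow> nat \<Rightarrow> int \<Rightarrow> bool" where
  "path_sign E v u p \<longleftrightarrow> (\<exists>vs ss. path_from E v vs ss \<and> last vs = u \<and> prod_list ss = p)"

lemma prod_list_sign: "set ss \<subseteq> {1, -1} \<Longrightarrow> prod_list ss \<in> {1, -1 :: int}"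
  by (induction ss) auto

lemma path_sign_sign: "signed_digraph V E \<Longrightarrow> path_sign E v u p \<Longrightarrow> p \<in> {1, -1}"
  unfolding path_sign_def using path_from_signs prod_list_sign by blast

lemma path_sign_start: "path_sign E v v 1"
  unfolding path_sign_def using path_from.start by force

lemma path_sign_start_unique:
  assumes "path_sign E v v p"
  shows "p = 1"
proof -
  obtain vs ss where path: "path_from E v vs ss" "last vs = v" "prod_list ss = p"
    using assms unfolding path_sign_def by blast
  then have simple: "hd vs = v" "distinct vs" "length vs = Suc (length ss)"
    using path_from_simple by blast+
  then obtain us where vs: "vs = v # us" by (cases vs) auto
  have "us = []"
  proof (rule ccontr)
    assume "us \<noteq> []"
    then have "v \<in> set us" using path(2) vs by (metis last_ConsR last_in_set)
    with simple(2) vs show False by simp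
  qed
  with path(3) simple(3) vs show "p = 1" by simp
qed

lemma path_sign_snoc:
  "acyclic (arc_rel_without E v) \<Longrightarrow> path_sign E v a p \<Longrightarrow> (a, b, s) \<in> E \<Longrightarrow> b \<noteq> v
    \<Longrightarrow> path_sign E v b (p * s)"
  unfolding path_sign_def by (force dest: path_from_snoc_acyclic)

lemma path_sign_closing:
  assumes sd: "signed_digraph V E" and npc: "no_positive_cycle E"
    and "path_sign E v a p" and arc: "(a, v, s) \<in> E"
  shows "p * s = -1"
proof -
  obtain vs ss where path: "path_from E v vs ss" "last vs = a" "prod_list ss = p"
    using assms(3) unfolding path_sign_def by blast
  with arc have "is_cycle E vs (ss @ [s])" using path_from_cycle by blast
  with npc have "cycle_sign (ss @ [s]) \<noteq> 1" unfolding no_positive_cycle_def by blast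
  then have "p * s \<noteq> 1" using path(3) by (simp add: cycle_sign_def)
  moreover have "p \<in> {1, -1}" "s \<in> {1, -1}"
    using path_sign_sign[OF sd assms(3)] signed_digraph_arcD[OF sd arc] by auto
  ultimately show ?thesis by auto
qed

lemma path_sign_exists:
  assumes "strongly_connected V E" "acyclic (arc_rel_without E v)" "v \<in> V" "u \<in> V"
  shows "\<exists>p. path_sign E v u p"
proof -
  have "(v, u) \<in> (arc_rel E)\<^sup>*" using assms strongly_connected_rtrancl by blast
  then show ?thesis
  proof (induction rule: rtrancl_induct)
    case base
    show ?case using path_sign_start by blast
  next
    case (step y z)
    then show ?case
      using path_sign_start path_sign_snoc[OF assms(2)] unfolding arc_rel_def by blast
  qed
qed

text \<open>Uniqueness is proved backwards along a path from u to v: at the last arc into v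
  the sign is forced by the absence of positive cycles.\<close>
lemma path_sign_unique:
  assumes sd: "signed_digraph V E" and sc: "strongly_connected V E" and npc: "no_positive_cycle E"
    and acyc: "acyclic (arc_rel_without E v)" and "v \<in> V" "u \<in> V"
  shows "path_sign E v u p \<Longrightarrow> path_sign E v u p' \<Longrightarrow> p = p'"
proof -
  have "(u, v) \<in> (arc_rel E)\<^sup>*" using sc assms(5,6) strongly_connected_rtrancl by blast
  then show "path_sign E v u p \<Longrightarrow> path_sign E v u p' \<Longrightarrow> p = p'"
  proof (induction arbitrary: p p' rule: converse_rtrancl_induct)
    case base
    then show ?case by (metis path_sign_start_unique)
  next
    case (step y z)
    then obtain s where arc: "(y, z, s) \<in> E" unfolding arc_rel_def by blast
    then have "s \<in> {1, -1}" using sd signed_digraph_arcD by blast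
    moreover have "p * s = p' * s"
    proof (cases "z = v")
      case True
      then show ?thesis using path_sign_closing[OF sd npc] step.prems arc by simp
    next
      case False
      then show ?thesis using step.IH path_sign_snoc[OF acyc] step.prems arc by blast
    qed
    ultimately show "p = p'" by auto
  qed
qed

definition switching :: "nat set \<Rightarrow> sdigraph \<Rightarrow> nat \<Rightarrow> (nat \<Rightarrow> int) \<Rightarrow> bool" where
  "switching V E v \<sigma> \<longleftrightarrow> \<sigma> v = 1 \<and> (\<forall>u\<in>V. \<sigma> u \<in> {1, -1}) \<and>
     (\<forall>a b s. (a, b, s) \<in> E \<longrightarrow> \<sigma> a * s = (if b = v then - \<sigma> b else \<sigma> b))"

lemma switching_exists:
  assumes sd: "signed_digraph V E" and sc: "strongly_connected V E" and npc: "no_positive_cycle E"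
    and fvs: "feedback_vertex_set V E {v}" and v: "v \<in> V"
  obtains \<sigma> where "switching V E v \<sigma>"
proof
  have acyc: "acyclic (arc_rel_without E v)" using fvs by (rule feedback_vertex_acyclic)
  define \<sigma> where "\<sigma> u = (THE p. path_sign E v u p)" for u
  have \<sigma>: "path_sign E v u p \<longleftrightarrow> p = \<sigma> u" if "u \<in> V" for u p
  proof -
    have "\<exists>!p. path_sign E v u p"
      using path_sign_exists[OF sc acyc v that] path_sign_unique[OF sd sc npc acyc v that] by blast
    then show ?thesis unfolding \<sigma>_def by (metis the1_equality)
  qed
  show "switching V E v \<sigma>"
    unfolding switching_def
  proof (intro conjI ballI allI impI)
    show "\<sigma> v = 1" using \<sigma>[OF v, of 1] path_sign_start[of E v] by simp
    show "\<sigma> u \<in> {1, -1}" if "u \<in> V" for u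
      using \<sigma>[OF that] path_sign_sign[OF sd] by blast
    fix a b s assume arc: "(a, b, s) \<in> E"
    then have "a \<in> V" "b \<in> V" using sd signed_digraph_arcD by blast+
    show "\<sigma> a * s = (if b = v then - \<sigma> b else \<sigma> b)"
    proof (cases "b = v")
      case True
      then show ?thesis
        using path_sign_closing[OF sd npc _ arc] \<sigma>[OF \<open>a \<in> V\<close>] \<open>\<sigma> v = 1\<close> by simp
    next
      case False
      then show ?thesis
        using path_sign_snoc[OF acyc _ arc] \<sigma>[OF \<open>a \<in> V\<close>] \<sigma>[OF \<open>b \<in> V\<close>] by simp
    qed
  qed
qed

lemma switching_unique_sign:
  assumes "switching V E v \<sigma>" "signed_digraph V E" "(a, b, s) \<in> E" "(a, b, s') \<in> E"
  shows "s = s'"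
proof -
  have "\<sigma> a \<in> {1, -1}" using assms signed_digraph_arcD unfolding switching_def by blast
  moreover have "\<sigma> a * s = \<sigma> a * s'" using assms(1,3,4) unfolding switching_def by metis
  ultimately show ?thesis by auto
qed

section \<open>And-or-nets under asynchronous updates\<close>

definition literal :: "nat set \<Rightarrow> nat \<Rightarrow> int \<Rightarrow> bool" where
  "literal x a s \<longleftrightarrow> (if s = 1 then a \<in> x else a \<notin> x)"

definition conjunctive :: "nat set \<Rightarrow> sdigraph \<Rightarrow> (nat set \<Rightarrow> nat set) \<Rightarrow> nat \<Rightarrow> bool" where
  "conjunctive V E f i \<longleftrightarrow> (\<forall>x \<subseteq> V. i \<in> f x \<longleftrightarrow> (\<forall>a s. (a, i, s) \<in> E \<longrightarrow> literal x a s))"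

definition disjunctive :: "nat set \<Rightarrow> sdigraph \<Rightarrow> (nat set \<Rightarrow> nat set) \<Rightarrow> nat \<Rightarrow> bool" where
  "disjunctive V E f i \<longleftrightarrow> (\<forall>x \<subseteq> V. i \<in> f x \<longleftrightarrow> (\<exists>a s. (a, i, s) \<in> E \<and> literal x a s))"

lemma and_or_net_conjunctive_or_disjunctive:
  assumes sd: "signed_digraph V E" and "and_or_net V E f" "i \<in> V"
  shows "conjunctive V E f i \<or> disjunctive V E f i"
proof -
  have sign: "s = 1 \<or> s = -1" if "(a, i, s) \<in> E" for a s
    using signed_digraph_arcD[OF sd that] by blast
  have pos: "(\<forall>j. ((j, i, 1) \<in> E \<longrightarrow> j \<in> x) \<and> ((j, i, -1) \<in> E \<longrightarrow> j \<notin> x))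
      \<longleftrightarrow> (\<forall>a s. (a, i, s) \<in> E \<longrightarrow> literal x a s)"
    and neg: "(\<forall>j. ((j, i, 1) \<in> E \<longrightarrow> j \<notin> x) \<and> ((j, i, -1) \<in> E \<longrightarrow> j \<in> x))
      \<longleftrightarrow> \<not> (\<exists>a s. (a, i, s) \<in> E \<and> literal x a s)" for x
    using sign unfolding literal_def by (metis (mono_tags) one_neq_neg_one)+
  have "(\<forall>x. x \<subseteq> V \<longrightarrow>
           (i \<in> f x \<longleftrightarrow> (\<forall>j. ((j, i, 1) \<in> E \<longrightarrow> j \<in> x) \<and> ((j, i, -1) \<in> E \<longrightarrow> j \<notin> x))))
      \<or> (\<forall>x. x \<subseteq> V \<longrightarrow>
           (i \<notin> f x \<longleftrightarrow> (\<forall>j. ((j, i, 1) \<in> E \<longrightarrow> j \<notin> x) \<and> ((j, i, -1) \<in> E \<longrightarrow> j \<in> x))))"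
    using conjunct2[OF conjunct2[OF assms(2)[unfolded and_or_net_def]]] assms(3) by (rule bspec)
  from this[unfolded pos neg] show ?thesis unfolding conjunctive_def disjunctive_def by auto
qed

lemma conjunctiveD:
  "conjunctive V E f i \<Longrightarrow> x \<subseteq> V \<Longrightarrow> i \<in> f x \<longleftrightarrow> (\<forall>a s. (a, i, s) \<in> E \<longrightarrow> literal x a s)"
  unfolding conjunctive_def by simp

lemma disjunctiveD:
  "disjunctive V E f i \<Longrightarrow> x \<subseteq> V \<Longrightarrow> i \<in> f x \<longleftrightarrow> (\<exists>a s. (a, i, s) \<in> E \<and> literal x a s)"
  unfolding disjunctive_def by simp

lemma and_or_net_uniform:
  assumes "signed_digraph V E" "and_or_net V E f" "i \<in> V" "x \<subseteq> V" "(a0, i, s0) \<in> E"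
    and "\<And>a s. (a, i, s) \<in> E \<Longrightarrow> literal x a s \<longleftrightarrow> P"
  shows "i \<in> f x \<longleftrightarrow> P"
proof -
  have "(\<forall>a s. (a, i, s) \<in> E \<longrightarrow> literal x a s) \<longleftrightarrow> P"
    "(\<exists>a s. (a, i, s) \<in> E \<and> literal x a s) \<longleftrightarrow> P"
    using assms(5,6) by blast+
  then show ?thesis
    using and_or_net_conjunctive_or_disjunctive[OF assms(1-3)] conjunctiveD disjunctiveD assms(4)
    by metis
qed

lemma and_or_net_mixed:
  assumes "signed_digraph V E" "and_or_net V E f" "i \<in> V" "x \<subseteq> V"
    and "(a, i, s) \<in> E" "literal x a s" "(a', i, s') \<in> E" "\<not> literal x a' s'"
  shows "i \<in> f x \<longleftrightarrow> \<not> conjunctive V E f i"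
proof (cases "conjunctive V E f i")
  case True
  with assms(4,7,8) show ?thesis by (auto dest: conjunctiveD)
next
  case False
  then have "disjunctive V E f i" using and_or_net_conjunctive_or_disjunctive[OF assms(1-3)] by blast
  with False assms(4-6) show ?thesis by (auto dest: disjunctiveD)
qed

lemma and_or_net_no_in_arcs:
  assumes "signed_digraph V E" "and_or_net V E f" "i \<in> V" "x \<subseteq> V" "\<forall>a s. (a, i, s) \<notin> E"
  shows "i \<in> f x \<longleftrightarrow> conjunctive V E f i"
proof (cases "conjunctive V E f i")
  case True
  with assms(4,5) show ?thesis by (auto dest: conjunctiveD)
next
  case False
  then have "disjunctive V E f i" using and_or_net_conjunctive_or_disjunctive[OF assms(1-3)] by blast
  with False assms(4,5) show ?thesis by (auto dest: disjunctiveD)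
qed

lemma upd_word_Nil [simp]: "upd_word f [] x = x"
  by (simp add: upd_word_def)

lemma upd_word_Cons [simp]: "upd_word f (u # w) x = upd_word f w (upd f u x)"
  by (simp add: upd_word_def)

lemma upd_word_append: "upd_word f (w @ w') x = upd_word f w' (upd_word f w x)"
  by (simp add: upd_word_def)

lemma upd_word_subset: "upd_word f w x \<subseteq> x \<union> set w"
proof (induction w arbitrary: x)
  case (Cons u w)
  have "upd f u x \<subseteq> insert u x" by (auto simp: upd_def)
  with Cons.IH[of "upd f u x"] show ?case by auto
qed simp

lemma upd_word_notin: "u \<notin> set w \<Longrightarrow> u \<in> upd_word f w x \<longleftrightarrow> u \<in> x"
  by (induction w arbitrary: x) (auto simp: upd_def)

lemma synchronizes_append: "synchronizes V f w \<Longrightarrow> synchronizes V f (w @ w')"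
  unfolding synchronizes_def by (auto simp: upd_word_append)

definition pattern :: "(nat \<Rightarrow> int) \<Rightarrow> bool \<Rightarrow> nat set" where
  "pattern \<sigma> c = {u. c \<longleftrightarrow> \<sigma> u = 1}"

context
  fixes V E f v \<sigma>
  assumes sd: "signed_digraph V E" and ao: "and_or_net V E f" and sw: "switching V E v \<sigma>"
    and v: "v \<in> V" and in_arc: "\<And>u. u \<in> V \<Longrightarrow> \<exists>a s. (a, u, s) \<in> E"
begin

lemma literal_pattern:
  assumes arc: "(a, u, s) \<in> E" and "a \<in> x \<longleftrightarrow> a \<in> pattern \<sigma> c"
  shows "literal x a s \<longleftrightarrow> (c \<longleftrightarrow> (if u = v then \<sigma> u = -1 else \<sigma> u = 1))"
proof -
  have "\<sigma> a \<in> {1, -1}" "s \<in> {1, -1}" "\<sigma> a * s = (if u = v then - \<sigma> u else \<sigma> u)"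
    using sw signed_digraph_arcD[OF sd arc] arc unfolding switching_def by auto
  with assms(2) show ?thesis unfolding literal_def pattern_def by auto
qed

lemma update_follows_pattern:
  assumes "u \<in> V" "u \<noteq> v" "x \<subseteq> V" "\<forall>a s. (a, u, s) \<in> E \<longrightarrow> (a \<in> x \<longleftrightarrow> a \<in> pattern \<sigma> c)"
  shows "u \<in> f x \<longleftrightarrow> u \<in> pattern \<sigma> c"
proof -
  obtain a0 s0 where a0: "(a0, u, s0) \<in> E" using in_arc[OF assms(1)] by blast
  have "u \<in> f x \<longleftrightarrow> (c \<longleftrightarrow> \<sigma> u = 1)"
  proof (rule and_or_net_uniform[OF sd ao assms(1,3) a0])
    fix a s assume arc: "(a, u, s) \<in> E"
    with assms(4) have "a \<in> x \<longleftrightarrow> a \<in> pattern \<sigma> c" by blast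
    with assms(2) show "literal x a s \<longleftrightarrow> (c \<longleftrightarrow> \<sigma> u = 1)" using literal_pattern[OF arc] by simp
  qed
  then show ?thesis unfolding pattern_def by simp
qed

lemma update_v_uniform:
  assumes "x \<subseteq> V" "\<forall>a s. (a, v, s) \<in> E \<longrightarrow> (a \<in> x \<longleftrightarrow> a \<in> pattern \<sigma> c)"
  shows "v \<in> f x \<longleftrightarrow> \<not> c"
proof -
  have "\<sigma> v = 1" using sw unfolding switching_def by blast
  obtain a0 s0 where a0: "(a0, v, s0) \<in> E" using in_arc[OF v] by blast
  show ?thesis
  proof (rule and_or_net_uniform[OF sd ao v assms(1) a0])
    fix a s assume arc: "(a, v, s) \<in> E"
    with assms(2) have "a \<in> x \<longleftrightarrow> a \<in> pattern \<sigma> c" by blast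
    with \<open>\<sigma> v = 1\<close> show "literal x a s \<longleftrightarrow> \<not> c" using literal_pattern[OF arc] by simp
  qed
qed

lemma update_v_mixed:
  assumes "x \<subseteq> V" "(b1, v, t1) \<in> E" "b1 \<in> x \<longleftrightarrow> b1 \<in> pattern \<sigma> (\<not> c)"
    and "(b2, v, t2) \<in> E" "b2 \<in> x \<longleftrightarrow> b2 \<in> pattern \<sigma> c"
  shows "v \<in> f x \<longleftrightarrow> \<not> conjunctive V E f v"
proof -
  have "\<sigma> v = 1" using sw unfolding switching_def by blast
  then have lits: "literal x b1 t1 \<longleftrightarrow> c" "literal x b2 t2 \<longleftrightarrow> \<not> c"
    using literal_pattern[OF assms(2,3)] literal_pattern[OF assms(4,5)] by auto
  show ?thesis
  proof (cases c)
    case True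
    with lits show ?thesis using and_or_net_mixed[OF sd ao v assms(1) assms(2) _ assms(4)] by blast
  next
    case False
    with lits show ?thesis using and_or_net_mixed[OF sd ao v assms(1) assms(4) _ assms(2)] by blast
  qed
qed

lemma sweep_pattern:
  "topo_sorted E A S \<Longrightarrow> v \<notin> set S \<Longrightarrow> set S \<subseteq> V \<Longrightarrow> x \<subseteq> V \<Longrightarrow> x \<inter> A = pattern \<sigma> c \<inter> A
    \<Longrightarrow> upd_word f S x \<inter> (A \<union> set S) = pattern \<sigma> c \<inter> (A \<union> set S)"
proof (induction S arbitrary: A x)
  case Nil
  then show ?case by simp
next
  case (Cons u S)
  have "u \<in> f x \<longleftrightarrow> u \<in> pattern \<sigma> c"
    using Cons.prems by (intro update_follows_pattern) auto
  then have "upd f u x \<inter> insert u A = pattern \<sigma> c \<inter> insert u A"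
    using Cons.prems(5) by (auto simp: upd_def)
  moreover have "upd f u x \<subseteq> V" using Cons.prems(3,4) by (auto simp: upd_def)
  ultimately show ?case
    using Cons.IH[of "insert u A" "upd f u x"] Cons.prems(1-3) by simp
qed

lemma sweep_all:
  assumes "topo_sorted E {v} S" "set S = V - {v}" "x \<subseteq> V"
  shows "upd_word f S x = V \<inter> pattern \<sigma> (v \<in> x)"
proof -
  have "\<sigma> v = 1" using sw unfolding switching_def by blast
  then have "x \<inter> {v} = pattern \<sigma> (v \<in> x) \<inter> {v}" unfolding pattern_def by auto
  then have "upd_word f S x \<inter> V = pattern \<sigma> (v \<in> x) \<inter> V"
    using sweep_pattern[OF assms(1)] assms(2,3) v by (simp add: insert_absorb)
  moreover have "upd_word f S x \<subseteq> V" using upd_word_subset assms(2,3) by blast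
  ultimately show ?thesis by blast
qed

lemma second_update_of_v_decided:
  assumes T: "topo_sorted E {v} T" "set T \<subseteq> V - {v}"
    and b1: "(b1, v, t1) \<in> E" "b1 \<in> insert v (set T)"
    and b2: "(b2, v, t2) \<in> E" "b2 \<in> V - insert v (set T)"
  shows "v \<in> upd_word f (v # T @ [v]) (V \<inter> pattern \<sigma> c) \<longleftrightarrow> \<not> conjunctive V E f v"
proof -
  have "\<sigma> v = 1" using sw unfolding switching_def by blast
  define y0 where "y0 = V \<inter> pattern \<sigma> c"
  define y1 where "y1 = upd f v y0"
  define y2 where "y2 = upd_word f T y1"
  have "v \<in> f y0 \<longleftrightarrow> \<not> c"
    using sd signed_digraph_arcD unfolding y0_def by (intro update_v_uniform) auto
  then have "y1 \<inter> {v} = pattern \<sigma> (\<not> c) \<inter> {v}" "y1 \<subseteq> V"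
    using \<open>\<sigma> v = 1\<close> v unfolding y1_def y0_def upd_def pattern_def by auto
  moreover have "v \<notin> set T" "set T \<subseteq> V" using T(2) by auto
  ultimately have "y2 \<inter> insert v (set T) = pattern \<sigma> (\<not> c) \<inter> insert v (set T)"
    using sweep_pattern[OF T(1)] unfolding y2_def by simp
  then have "b1 \<in> y2 \<longleftrightarrow> b1 \<in> pattern \<sigma> (\<not> c)" using b1(2) by blast
  moreover have "b2 \<in> y2 \<longleftrightarrow> b2 \<in> pattern \<sigma> c"
    using b2(2) upd_word_notin[of b2 T f y1] unfolding y2_def y1_def y0_def upd_def by auto
  moreover have "y2 \<subseteq> V"
    using upd_word_subset \<open>y1 \<subseteq> V\<close> T(2) unfolding y2_def by blast
  ultimately have "v \<in> f y2 \<longleftrightarrow> \<not> conjunctive V E f v"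
    using update_v_mixed b1(1) b2(1) by blast
  then show ?thesis unfolding y2_def y1_def y0_def by (simp add: upd_word_append upd_def)
qed

lemma synchronizing_word:
  assumes S: "topo_sorted E {v} S" "set S = V - {v}"
    and T: "topo_sorted E {v} T" "set T \<subseteq> V - {v}"
    and b1: "(b1, v, t1) \<in> E" "b1 \<in> insert v (set T)"
    and b2: "(b2, v, t2) \<in> E" "b2 \<in> V - insert v (set T)"
  shows "synchronizes V f (S @ v # T @ v # S)"
  unfolding synchronizes_def
proof (intro exI allI impI)
  fix x assume "x \<subseteq> V"
  let ?y = "upd_word f (v # T @ [v]) (upd_word f S x)"
  have "?y \<subseteq> V"
    using upd_word_subset sweep_all[OF S \<open>x \<subseteq> V\<close>] T(2) v by fastforce
  have "upd_word f (S @ v # T @ v # S) x = upd_word f S ?y"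
    by (simp add: upd_word_append)
  also have "\<dots> = V \<inter> pattern \<sigma> (v \<in> ?y)"
    using sweep_all[OF S \<open>?y \<subseteq> V\<close>] .
  also have "\<dots> = V \<inter> pattern \<sigma> (\<not> conjunctive V E f v)"
    using second_update_of_v_decided[OF T b1 b2] sweep_all[OF S \<open>x \<subseteq> V\<close>] by simp
  finally show "upd_word f (S @ v # T @ v # S) x = V \<inter> pattern \<sigma> (\<not> conjunctive V E f v)" .
qed

end

section \<open>Short synchronizing words\<close>

lemma topo_sorted_exists_in_closed:
  assumes "acyclic (arc_rel_without E v)" "finite W" "v \<notin> W"
    and "\<forall>w\<in>W. \<forall>a s. (a, w, s) \<in> E \<longrightarrow> a \<in> insert v W"
  obtains T where "topo_sorted E {v} T" "set T = W" "distinct T"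
proof -
  have "arc_rel E \<inter> W \<times> W \<subseteq> arc_rel_without E v"
    using assms(3) unfolding arc_rel_without_def by blast
  with assms(1) have "acyclic (arc_rel E \<inter> W \<times> W)" by (rule acyclic_subset)
  moreover have "\<forall>w\<in>W. \<forall>a s. (a, w, s) \<in> E \<longrightarrow> a \<in> {v} \<union> W" using assms(4) by simp
  ultimately show thesis using topo_sorted_exists[OF assms(2)] that by blast
qed

lemma single_vertex_synchronized:
  assumes sd: "signed_digraph {u} E" and npc: "no_positive_cycle E"
    and not_cycle: "\<not> graph_is_cycle {u} E" and ao: "and_or_net {u} E f"
  shows "synchronizes {u} f [u]"
proof -
  have "(u, u, 1) \<notin> E"
  proof
    assume "(u, u, 1) \<in> E"
    then have "is_cycle E [u] [1]" unfolding is_cycle_def by simp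
    with npc show False unfolding no_positive_cycle_def cycle_sign_def by fastforce
  qed
  moreover have "(u, u, -1) \<notin> E"
  proof
    assume loop: "(u, u, -1) \<in> E"
    with sd \<open>(u, u, 1) \<notin> E\<close> have "E = {(u, u, -1)}"
      unfolding signed_digraph_def by auto
    with loop have "graph_is_cycle {u} E"
      unfolding graph_is_cycle_def is_cycle_def by (intro exI[of _ "[u]"] exI[of _ "[-1]"]) simp
    with not_cycle show False ..
  qed
  ultimately have "\<forall>a s. (a, u, s) \<notin> E" using sd signed_digraph_arcD by blast
  then have "upd f u x = (if conjunctive {u} E f u then {u} else {})" if "x \<subseteq> {u}" for x
    using and_or_net_no_in_arcs[OF sd ao _ that] that by (auto simp: upd_def)
  then show ?thesis unfolding synchronizes_def by auto
qed

lemma short_synchronizing_word_feedback_vertex: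
  assumes sd: "signed_digraph V E" and sc: "strongly_connected V E" and npc: "no_positive_cycle E"
    and not_cycle: "\<not> graph_is_cycle V E" and "finite V" and "2 \<le> card V"
    and v0: "v0 \<in> V" "feedback_vertex_set V E {v0}"
  shows "\<exists>w. length w \<le> 3 * card V - 2 \<and> set w \<subseteq> V \<and> (\<forall>f. and_or_net V E f \<longrightarrow> synchronizes V f w)"
proof -
  have in_arc: "\<exists>a s. (a, u, s) \<in> E" if "u \<in> V" for u
    using strongly_connected_in_arc[OF sc \<open>2 \<le> card V\<close> that] by blast
  then have "E \<noteq> {}" using v0(1) by blast
  obtain \<sigma>0 where \<sigma>0: "switching V E v0 \<sigma>0" using switching_exists[OF sd sc npc v0(2,1)] .
  obtain v a1 s1 a2 s2 where v: "v \<in> V" "feedback_vertex_set V E {v}"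
    and a: "(a1, v, s1) \<in> E" "(a2, v, s2) \<in> E" "a1 \<noteq> a2"
    by (rule feedback_vertex_with_two_in_neighbours[OF sd sc \<open>E \<noteq> {}\<close> not_cycle
          switching_unique_sign[OF \<sigma>0 sd] v0])
  obtain \<sigma> where \<sigma>: "switching V E v \<sigma>" using switching_exists[OF sd sc npc v(2,1)] .
  have acyc: "acyclic (arc_rel_without E v)" using v(2) by (rule feedback_vertex_acyclic)
  obtain W b1 t1 b2 t2 where W: "W \<subseteq> V - {v}" "\<forall>w\<in>W. \<forall>a s. (a, w, s) \<in> E \<longrightarrow> a \<in> insert v W"
    and b: "(b1, v, t1) \<in> E" "b1 \<in> insert v W" "(b2, v, t2) \<in> E" "b2 \<in> V - insert v W"
    using separating_in_closed_set[OF sd acyc a] .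
  have "\<forall>w\<in>V - {v}. \<forall>a s. (a, w, s) \<in> E \<longrightarrow> a \<in> insert v (V - {v})"
    by (auto dest: signed_digraph_arcD[OF sd])
  moreover have "finite (V - {v})" "v \<notin> V - {v}" using \<open>finite V\<close> by auto
  ultimately obtain S where S: "topo_sorted E {v} S" "set S = V - {v}" "distinct S"
    using topo_sorted_exists_in_closed[OF acyc] by metis
  have "finite W" "v \<notin> W" using W(1) \<open>finite V\<close> finite_subset by auto
  then obtain T where T: "topo_sorted E {v} T" "set T = W" "distinct T"
    using topo_sorted_exists_in_closed[OF acyc _ _ W(2)] by metis
  have "length S = card V - 1"
    using distinct_card[OF S(3)] S(2) v(1) \<open>finite V\<close> by (simp add: card_Diff_singleton)
  moreover have "length T \<le> card V - 2"
  proof -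
    have "{v, b2} \<subseteq> V" "card {v, b2} = 2" using v(1) b(4) by auto
    then have "card (V - {v, b2}) = card V - 2"
      using \<open>finite V\<close> by (simp add: card_Diff_subset)
    moreover have "W \<subseteq> V - {v, b2}" using W(1) b(4) by blast
    ultimately have "card W \<le> card V - 2"
      using card_mono[of "V - {v, b2}" W] \<open>finite V\<close> by simp
    then show ?thesis using distinct_card[OF T(3)] T(2) by simp
  qed
  ultimately have "length (S @ v # T @ v # S) \<le> 3 * card V - 2"
    using \<open>2 \<le> card V\<close> by simp
  moreover have "set (S @ v # T @ v # S) \<subseteq> V" using S(2) T(2) W(1) v(1) by auto
  moreover have "synchronizes V f (S @ v # T @ v # S)" if "and_or_net V E f" for f
  proof -
    have "set T \<subseteq> V - {v}" "b1 \<in> insert v (set T)" "b2 \<in> V - insert v (set T)"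
      using T(2) W(1) b(2,4) by auto
    with b(1,3) show ?thesis by (intro synchronizing_word[OF sd that \<sigma> v(1) in_arc S(1,2) T(1)])
  qed
  ultimately show ?thesis by (intro exI[of _ "S @ v # T @ v # S"]) simp
qed

lemma short_synchronizing_word:
  assumes sd: "signed_digraph V E" and sc: "strongly_connected V E" and npc: "no_positive_cycle E"
    and not_cycle: "\<not> graph_is_cycle V E" and "finite V" and "tau V E \<le> 1"
  shows "\<exists>w. length w \<le> 3 * card V - 1 \<and> set w \<subseteq> V \<and> (\<forall>f. and_or_net V E f \<longrightarrow> synchronizes V f w)"
proof -
  consider "V = {}" | u where "V = {u}" | "2 \<le> card V"
    using \<open>finite V\<close> by (metis One_nat_def card_0_eq card_1_singletonE less_2_cases not_less)
  then show ?thesis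
  proof cases
    case 1
    then show ?thesis by (intro exI[of _ "[]"]) (simp add: synchronizes_def)
  next
    case (2 u)
    have "synchronizes {u} f [u]" if "and_or_net {u} E f" for f
      using single_vertex_synchronized[OF sd[unfolded 2] npc not_cycle[unfolded 2] that] .
    with 2 show ?thesis by (intro exI[of _ "[u]"]) simp
  next
    case 3
    then obtain v0 where "v0 \<in> V" "feedback_vertex_set V E {v0}"
      using tau_le_one_feedback_vertex[OF sd \<open>finite V\<close> _ \<open>tau V E \<le> 1\<close>] by force
    with 3 show ?thesis
      using short_synchronizing_word_feedback_vertex[OF sd sc npc not_cycle \<open>finite V\<close>]
      by (meson diff_le_mono2 le_trans one_le_numeral)
  qed
qed

theorem proposition5:
  fixes n :: nat and E :: sdigraph
  assumes "signed_digraph {1..n} E"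
    and "strongly_connected {1..n} E"
    and "no_positive_cycle E"
    and "\<not> graph_is_cycle {1..n} E"
    and "tau {1..n} E \<le> 1"
  shows "\<exists>w. length w = 3 * n - 1 \<and> set w \<subseteq> {1..n} \<and>
           (\<forall>f. and_or_net {1..n} E f \<longrightarrow> synchronizes {1..n} f w)"
proof -
  obtain w where w: "length w \<le> 3 * n - 1" "set w \<subseteq> {1..n}"
    "\<forall>f. and_or_net {1..n} E f \<longrightarrow> synchronizes {1..n} f w"
    using short_synchronizing_word[OF assms(1-4) _ assms(5)] by auto
  let ?pad = "replicate (3 * n - 1 - length w) 1"
  have "set ?pad \<subseteq> {1..n}" by (cases "n = 0") auto
  with w show ?thesis
    by (intro exI[of _ "w @ ?pad"]) (simp add: synchronizes_append)
qed

end
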